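(* Let $w\in\{0,1\}^*$ be a $\frac{7}{3}$-power-free word with $|w|\geq 52$. Then $w$ contains both $\mu^3(0)=01101001$ and $\mu^3(1)=10010110$ as subwords.
   Context: $\mu$ is the Thue–Morse morphism on $\{0,1\}^*$, defined by $\mu(0)=01$, $\mu(1)=10$. A word $w'$ is a subword of $w$ if $w=uw'v$ for some words $u,v$. For a rational $\alpha\ge 1$, an $\alpha$-power is a word of the form $x^nx'$ with $x$ a nonempty word, $x'$ a prefix of $x$, $n$ a nonnegative integer and $n+|x'|/|x|=\alpha$. A word is $\alpha$-power-free if none of its subwords is a $\beta$-power for any rational $\beta\geq\alpha$. *)

theory Defs
  imports Complex_Main "HOL-Library.Sublist"
begin

text \<open>Binary words are lists over nat with letters in {0,1}.\<close>

fun tm :: "nat \<Rightarrow> nat list" where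
  "tm a = (if a = 0 then [0,1] else [1,0])"

definition mu :: "nat list \<Rightarrow> nat list" where
  "mu w = concat (map tm w)"

definition subword :: "'a list \<Rightarrow> 'a list \<Rightarrow> bool" where
  "subword v w \<longleftrightarrow> (\<exists>u u'. w = u @ v @ u')"

definition is_power :: "'a list \<Rightarrow> rat \<Rightarrow> bool" where
  "is_power u alpha \<longleftrightarrow> (\<exists>x x' n. x \<noteq> [] \<and> prefix x' x \<and>
      u = concat (replicate n x) @ x' \<and>
      alpha = of_nat n + of_nat (length x') / of_nat (length x))"

definition power_free :: "rat \<Rightarrow> 'a list \<Rightarrow> bool" where
  "power_free alpha w \<longleftrightarrow> (\<forall>v beta. subword v w \<and> beta \<ge> alpha \<longrightarrow> \<not> is_power v beta)"

end

theory Submission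
  imports Defs
begin

text \<open>Exhaustive search: extend a binary word letter by letter and discard it as soon as
  it ends with a \<open>7/3\<close>-power; every power occurring in a word is a suffix of one of its
  prefixes, so this discards exactly the words that are not \<open>7/3\<close>-power-free. Every
  branch of the resulting finite tree dies or contains both \<open>\<mu>\<^sup>3(0)\<close> and
  \<open>\<mu>\<^sup>3(1)\<close> before depth 23, so the bound 52 is not sharp.\<close>

lemma subword_eq_sublist: "subword = sublist"
  by (auto simp: fun_eq_iff subword_def sublist_def)

lemma power_free_sublist:
  assumes "power_free \<alpha> w" and "sublist v w"
  shows "power_free \<alpha> v"
  using assms sublist_order.order_trans unfolding power_free_def subword_eq_sublist by blast

definition fractional_power :: "'a list \<Rightarrow> nat \<Rightarrow> 'a list" where
  "fractional_power x L = concat (replicate (L div length x) x) @ take (L mod length x) x"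

lemma is_power_fractional_power:
  assumes "x \<noteq> []"
  shows "is_power (fractional_power x L) (of_nat L / of_nat (length x))"
proof -
  define p where "p = length x"
  have "p > 0" using assms by (simp add: p_def)
  then have "length (take (L mod p) x) = L mod p"
    by (simp add: p_def)
  moreover have "(of_nat L :: rat) / of_nat p = of_nat (L div p) + of_nat (L mod p) / of_nat p"
    using \<open>p > 0\<close> by (simp add: field_simps flip: of_nat_mult of_nat_add)
  ultimately show ?thesis
    using assms unfolding is_power_def fractional_power_def p_def
    by (metis take_is_prefix)
qed

text \<open>\<open>L = \<lceil>a p / b\<rceil>\<close> is the length of the shortest power of period \<open>p\<close> and
  exponent at least \<open>a/b\<close>.\<close>
definition ends_with_power :: "nat \<Rightarrow> nat \<Rightarrow> 'a list \<Rightarrow> bool" where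
  "ends_with_power a b w \<longleftrightarrow>
     (\<exists>p \<in> set [1..<Suc (length w)]. let L = (a * p + b - 1) div b in
         L \<le> length w \<and> (let s = drop (length w - L) w in s = fractional_power (take p s) L))"

lemma ends_with_power_not_power_free:
  assumes "ends_with_power a b w" and "0 < b" and "b \<le> a"
  shows "\<not> power_free (of_nat a / of_nat b) w"
proof -
  obtain p where "1 \<le> p" and p: "let L = (a * p + b - 1) div b in
      L \<le> length w \<and> (let s = drop (length w - L) w in s = fractional_power (take p s) L)"
    using assms(1) unfolding ends_with_power_def by auto
  define L where "L = (a * p + b - 1) div b"
  define s where "s = drop (length w - L) w"
  have "L \<le> length w" and s: "s = fractional_power (take p s) L"
    using p unfolding L_def s_def Let_def by auto
  have "b * p \<le> a * p + b - 1"
    using assms(2) mult_le_mono1[OF assms(3), of p] by linarith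
  then have "p \<le> L"
    using assms(2) unfolding L_def by (metis div_le_mono nonzero_mult_div_cancel_left less_not_refl2)
  have "length s = L"
    using \<open>L \<le> length w\<close> by (simp add: s_def)
  then have x: "length (take p s) = p" "take p s \<noteq> []"
    using \<open>p \<le> L\<close> \<open>1 \<le> p\<close> by auto
  have "a * p \<le> b * L"
  proof -
    have "a * p + b - 1 < b * L + b"
      using assms(2) unfolding L_def
      by (metis add.commute add_less_mono1 div_mult_mod_eq mod_less_divisor mult.commute)
    then show ?thesis by linarith
  qed
  then have "(of_nat a :: rat) / of_nat b \<le> of_nat L / of_nat p"
    using assms(2) \<open>1 \<le> p\<close>
    by (simp add: divide_simps flip: of_nat_mult) (simp add: mult.commute)
  moreover have "is_power s (of_nat L / of_nat p)"
    using is_power_fractional_power[OF x(2), of L] s x(1) by simp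
  moreover have "subword s w"
    by (simp add: subword_eq_sublist s_def)
  ultimately show ?thesis
    unfolding power_free_def by blast
qed

fun all_extensions_contain ::
  "('a list \<Rightarrow> bool) \<Rightarrow> 'a list \<Rightarrow> 'a list list \<Rightarrow> nat \<Rightarrow> 'a list \<Rightarrow> bool" where
  "all_extensions_contain bad \<Sigma> vs 0 u \<longleftrightarrow> (\<forall>v \<in> set vs. sublist v u)"
| "all_extensions_contain bad \<Sigma> vs (Suc n) u \<longleftrightarrow> (\<forall>v \<in> set vs. sublist v u) \<or>
     (\<forall>c \<in> set \<Sigma>. bad (u @ [c]) \<or> all_extensions_contain bad \<Sigma> vs n (u @ [c]))"

lemma prefix_snoc_nth:
  assumes "prefix u w" and "length u < length w"
  shows "prefix (u @ [w ! length u]) w"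
  using assms by (metis prefix_def append_eq_conv_conj take_Suc_conv_app_nth take_is_prefix)

lemma all_extensions_contain_sound:
  assumes "all_extensions_contain bad \<Sigma> vs n u"
    and "prefix u w" and "length u + n \<le> length w" and "set w \<subseteq> set \<Sigma>"
    and "\<And>v. prefix v w \<Longrightarrow> \<not> bad v"
  shows "\<forall>v \<in> set vs. sublist v w"
  using assms(1-3)
proof (induction n arbitrary: u)
  case 0
  then show ?case
    using prefix_imp_sublist sublist_order.order_trans by simp blast
next
  case (Suc n)
  show ?case
  proof (cases "\<forall>v \<in> set vs. sublist v u")
    case True
    then show ?thesis
      using Suc.prems(2) prefix_imp_sublist sublist_order.order_trans by blast
  next
    case False
    define c where "c = w ! length u"
    have "prefix (u @ [c]) w"
      using Suc.prems(2,3) unfolding c_def by (intro prefix_snoc_nth) auto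
    moreover have "c \<in> set \<Sigma>"
      using Suc.prems(3) assms(4) by (auto simp: c_def)
    ultimately have "all_extensions_contain bad \<Sigma> vs n (u @ [c])"
      using Suc.prems(1) False assms(5) by auto
    then show ?thesis
      using Suc.IH \<open>prefix (u @ [c]) w\<close> Suc.prems(3) by simp
  qed
qed

lemma mu_cube_letters:
  "(mu ^^ 3) [0] = [0,1,1,0,1,0,0,1]" "(mu ^^ 3) [1] = [1,0,0,1,0,1,1,0]"
  by (simp_all add: mu_def numeral_eq_Suc)

lemma mu_cube_letters_forced:
  "all_extensions_contain (ends_with_power 7 3) [0, 1::nat]
     [[0,1,1,0,1,0,0,1], [1,0,0,1,0,1,1,0]] 23 []"
  by code_simp

theorem lemma3:
  fixes w :: "nat list"
  assumes "set w \<subseteq> {0, 1}"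
    and "power_free (7/3) w"
    and "length w \<ge> 52"
  shows "subword ((mu ^^ 3) [0]) w \<and> subword ((mu ^^ 3) [1]) w"
proof -
  have "\<not> ends_with_power 7 3 v" if "prefix v w" for v :: "nat list"
    using ends_with_power_not_power_free[of 7 3 v] power_free_sublist[OF assms(2)] that
    by fastforce
  then have "\<forall>v \<in> set [[0,1,1,0,1,0,0,1], [1,0,0,1,0,1,1,0]]. sublist v w"
    using all_extensions_contain_sound[OF mu_cube_letters_forced] assms(1,3) by simp
  then show ?thesis
    unfolding mu_cube_letters subword_eq_sublist by simp
qed

end
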